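(* Let $\alpha: I\to M$ be a unit-speed curve on an oriented surface $M\subset E^3$ with Darboux frame $\{T,V,U\}$ and curvatures $k_g,k_n,\tau_g$, and assume $(k_g(s),k_n(s))\neq(0,0)$ for all $s\in I$. Let $\gamma(s)=\alpha(s)+y_1(s)T(s)+y_2(s)V(s)+y_3(s)U(s)$, with $y_1,y_2,y_3$ smooth functions on $I$, be an associated curve of $\alpha$ whose tangent vector $\gamma'(s)$ is linearly dependent with $T(s)$, i.e. $\gamma'(s)=R(s)T(s)$ with $R(s)\neq 0$ for all $s$. Then the following are equivalent: (i) $\gamma$ is a general helix; (ii) $\alpha$ is a helical curve on $M$; (iii) $\alpha$ is a $D_n$-Darboux slant helix on $M$.
   Context: $M$ is an oriented surface in Euclidean 3-space $E^3$ and $\alpha:I\to M$ is a unit-speed curve with arc-length parameter $s$. Its Darboux frame $\{T,V,U\}$ consists of the unit tangent $T=\alpha'$, the unit surface normal $U$ of $M$ along $\alpha$, and $V=U\times T$; it satisfies $T'=k_gV+k_nU$, $V'=-k_gT+\tau_gU$, $U'=-k_nT-\tau_gV$, where $k_g,k_n,\tau_g$ are the geodesic curvature, normal curvature and geodesic torsion of $\alpha$. A regular curve in $E^3$ is a general helix if its unit tangent makes a constant angle with a fixed direction. $\alpha$ is a helical curve on $M$ if there are a fixed unit vector $d$ and a constant angle $\theta$ with $\langle T,d\rangle=\cos\theta$. The normal Darboux vector field of $\alpha$ is $D_n=-k_nV+k_gU$; $\alpha$ is a $D_n$-Darboux slant helix if the unit vector field $D_n/\|D_n\|$ makes a constant angle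 with a fixed unit direction. *)

theory Defs
  imports "HOL-Analysis.Analysis"
begin

definition smooth_real_on :: "real set \<Rightarrow> (real \<Rightarrow> real) \<Rightarrow> bool" where
  "smooth_real_on I f \<longleftrightarrow> (\<forall>n. \<forall>s\<in>I. ((deriv ^^ n) f) differentiable (at s))"

text \<open>Darboux frame data of a unit-speed curve alpha on an oriented surface:
  T = alpha', U the unit surface normal along alpha (orthogonal to T), V = U x T,
  and the Darboux frame equations with geodesic curvature kg, normal curvature kn
  and geodesic torsion tg.\<close>
definition darboux_frame ::
  "real set \<Rightarrow> (real \<Rightarrow> real^3) \<Rightarrow> (real \<Rightarrow> real^3) \<Rightarrow> (real \<Rightarrow> real^3) \<Rightarrow> (real \<Rightarrow> real^3)
   \<Rightarrow> (real \<Rightarrow> real) \<Rightarrow> (real \<Rightarrow> real) \<Rightarrow> (real \<Rightarrow> real) \<Rightarrow> bool" where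
  "darboux_frame I \<alpha> T V U kg kn tg \<longleftrightarrow>
     (\<forall>s\<in>I.
        (\<alpha> has_vector_derivative T s) (at s) \<and>
        norm (T s) = 1 \<and> norm (U s) = 1 \<and> T s \<bullet> U s = 0 \<and>
        V s = cross3 (U s) (T s) \<and>
        (T has_vector_derivative (kg s *\<^sub>R V s + kn s *\<^sub>R U s)) (at s) \<and>
        (V has_vector_derivative (- kg s *\<^sub>R T s + tg s *\<^sub>R U s)) (at s) \<and>
        (U has_vector_derivative (- kn s *\<^sub>R T s - tg s *\<^sub>R V s)) (at s))"

definition general_helix :: "real set \<Rightarrow> (real \<Rightarrow> real^3) \<Rightarrow> bool" where
  "general_helix I \<gamma> \<longleftrightarrow>
     (\<forall>s\<in>I. \<gamma> differentiable (at s) \<and> vector_derivative \<gamma> (at s) \<noteq> 0) \<and>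
     (\<exists>d \<theta>. norm d = 1 \<and>
        (\<forall>s\<in>I. ((1 / norm (vector_derivative \<gamma> (at s))) *\<^sub>R vector_derivative \<gamma> (at s)) \<bullet> d
                 = cos \<theta>))"

definition helical_curve :: "real set \<Rightarrow> (real \<Rightarrow> real^3) \<Rightarrow> bool" where
  "helical_curve I T \<longleftrightarrow> (\<exists>d \<theta>. norm d = 1 \<and> (\<forall>s\<in>I. T s \<bullet> d = cos \<theta>))"

definition normal_darboux :: "(real \<Rightarrow> real^3) \<Rightarrow> (real \<Rightarrow> real^3) \<Rightarrow> (real \<Rightarrow> real)
   \<Rightarrow> (real \<Rightarrow> real) \<Rightarrow> real \<Rightarrow> real^3" where
  "normal_darboux V U kg kn s = (- kn s) *\<^sub>R V s + kg s *\<^sub>R U s"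

definition Dn_darboux_slant_helix ::
  "real set \<Rightarrow> (real \<Rightarrow> real^3) \<Rightarrow> (real \<Rightarrow> real^3) \<Rightarrow> (real \<Rightarrow> real) \<Rightarrow> (real \<Rightarrow> real) \<Rightarrow> bool" where
  "Dn_darboux_slant_helix I V U kg kn \<longleftrightarrow>
     (\<exists>d \<theta>. norm d = 1 \<and>
        (\<forall>s\<in>I. ((1 / norm (normal_darboux V U kg kn s)) *\<^sub>R normal_darboux V U kg kn s) \<bullet> d
                 = cos \<theta>))"

end

theory Submission
  imports Defs
begin

(*
  Since gamma' = R T with R continuous and nowhere zero, the unit tangent of gamma is sgn R * T
  with sgn R constant on the interval I, so (i) and (ii) are the same condition.

  For (ii) <-> (iii) put k = sqrt (kg^2 + kn^2) = |D_n|. Then W = (kg V + kn U) / k and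
  B = D_n / k = (- kn V + kg U) / k are the Frenet principal normal and binormal of alpha, with
  T' = k W, W' = - k T + tau B, B' = - tau W, where tau = (kg kn' - kn kg') / k^2 + tg.
  So (ii) <-> (iii) is Lancret's theorem in this frame: if T.d is constant, then W.d = 0 and
  hence B.d is constant. Conversely, if B.d is constant, then tau (W.d) = 0; either tau vanishes
  identically, so that B itself is constant and orthogonal to T, or (T.d)^2 + (W.d)^2 is
  constant and a connectedness argument shows W.d = 0 everywhere, so T.d is constant.
*)

lemma has_real_derivative_inner_left:
  assumes "(f has_vector_derivative f') F"
  shows "((\<lambda>x. f x \<bullet> d) has_real_derivative f' \<bullet> d) F"
  using bounded_linear.has_vector_derivative[OF bounded_linear_inner_left assms]
  unfolding has_real_derivative_iff_has_vector_derivative .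

lemma DERIV_locally_constant_eq_0:
  fixes f :: "real \<Rightarrow> real"
  assumes "open S" "s \<in> S" "\<forall>y\<in>S. f y = c" "(f has_real_derivative l) (at s)"
  shows "l = 0"
proof -
  have "(f has_real_derivative 0) (at s)"
    by (rule has_field_derivative_transform_within_open[OF DERIV_const assms(1,2)]) (use assms(3) in auto)
  then show ?thesis using assms(4) DERIV_unique by blast
qed

lemma constant_on_if_has_real_derivative_0:
  fixes f :: "real \<Rightarrow> real"
  assumes "is_interval S" "\<And>s. s \<in> S \<Longrightarrow> (f has_real_derivative 0) (at s)"
  shows "f constant_on S"
  unfolding constant_on_def
  using has_field_derivative_zero_constant[OF is_interval_convex[OF assms(1)]]
    assms(2) has_field_derivative_at_within by blast

lemma sgn_constant_if_continuous_nonvanishing: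
  fixes f :: "'a::topological_space \<Rightarrow> real"
  assumes "connected S" "continuous_on S f" "\<forall>x\<in>S. f x \<noteq> 0"
  shows "\<exists>\<epsilon>. \<bar>\<epsilon>\<bar> = 1 \<and> (\<forall>x\<in>S. sgn (f x) = \<epsilon>)"
proof -
  have "(\<lambda>x. sgn (f x)) ` S \<subseteq> {-1, 1}"
    using assms(3) by (auto simp: sgn_real_def)
  then have "(\<lambda>x. sgn (f x)) constant_on S"
    using assms(1-3) by (intro continuous_finite_range_constant continuous_intros)
      (auto intro: finite_subset)
  then obtain \<epsilon> where \<epsilon>: "\<forall>x\<in>S. sgn (f x) = \<epsilon>"
    unfolding constant_on_def by blast
  show ?thesis
  proof (cases "S = {}")
    case True
    then show ?thesis by (intro exI[of _ 1]) simp
  next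
    case False
    then obtain x where "x \<in> S" by blast
    then have "\<bar>\<epsilon>\<bar> = 1"
      using \<epsilon> assms(3) by (auto simp: sgn_real_def)
    then show ?thesis using \<epsilon> by blast
  qed
qed

lemma smooth_real_on_has_real_derivative:
  "smooth_real_on I f \<Longrightarrow> s \<in> I \<Longrightarrow> (f has_real_derivative deriv f s) (at s)"
  unfolding smooth_real_on_def by (metis DERIV_deriv_iff_real_differentiable funpow_0)

lemma smooth_real_on_differentiable: "smooth_real_on I f \<Longrightarrow> s \<in> I \<Longrightarrow> f differentiable (at s)"
  unfolding smooth_real_on_def by (metis funpow_0)

lemma smooth_real_on_continuous_on: "smooth_real_on I f \<Longrightarrow> continuous_on I f"
  unfolding smooth_real_on_def
  by (metis continuous_at_imp_continuous_on differentiable_imp_continuous_within funpow_0)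

lemma smooth_real_on_continuous_on_deriv: "smooth_real_on I f \<Longrightarrow> continuous_on I (deriv f)"
  unfolding smooth_real_on_def
  by (metis continuous_at_imp_continuous_on differentiable_imp_continuous_within
      funpow_0 funpow_Suc_right o_apply)

lemma helical_curve_cong:
  "(\<And>s. s \<in> I \<Longrightarrow> T s = T' s) \<Longrightarrow> helical_curve I T \<longleftrightarrow> helical_curve I T'"
  unfolding helical_curve_def by simp

lemma helical_curve_scaleR_iff:
  assumes "\<bar>\<epsilon>\<bar> = 1"
  shows "helical_curve I (\<lambda>s. \<epsilon> *\<^sub>R T s) \<longleftrightarrow> helical_curve I T"
proof -
  have flip: "helical_curve I (\<lambda>s. c *\<^sub>R X s)" if c: "\<bar>c\<bar> = 1" and X: "helical_curve I X" for c X
  proof -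
    obtain d \<theta> where "norm d = 1" "\<forall>s\<in>I. X s \<bullet> d = cos \<theta>"
      using X unfolding helical_curve_def by blast
    moreover have "c * c = 1"
      using c abs_mult_self_eq[of c] by simp
    ultimately show ?thesis
      unfolding helical_curve_def using c by (intro exI[of _ "c *\<^sub>R d"] exI[of _ \<theta>]) auto
  qed
  show ?thesis
    using flip[OF assms] flip[of \<epsilon> "\<lambda>s. \<epsilon> *\<^sub>R T s"] assms abs_mult_self_eq[of \<epsilon>] by auto
qed

lemma helical_curve_iff_constant_inner:
  assumes "\<forall>s\<in>I. norm (T s) = 1"
  shows "helical_curve I T \<longleftrightarrow> (\<exists>d. norm d = 1 \<and> (\<lambda>s. T s \<bullet> d) constant_on I)"
proof
  assume "helical_curve I T"
  then show "\<exists>d. norm d = 1 \<and> (\<lambda>s. T s \<bullet> d) constant_on I"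
    unfolding helical_curve_def constant_on_def by blast
next
  assume "\<exists>d. norm d = 1 \<and> (\<lambda>s. T s \<bullet> d) constant_on I"
  then obtain d c where d: "norm d = 1" "\<And>s. s \<in> I \<Longrightarrow> T s \<bullet> d = c"
    unfolding constant_on_def by blast
  have "T s \<bullet> d = cos (arccos c)" if "s \<in> I" for s
    using Cauchy_Schwarz_ineq2[of "T s" d] assms d that by auto
  then show "helical_curve I T"
    unfolding helical_curve_def using d(1) by blast
qed

lemma frenet_system_middle_component_eq_0:
  fixes a b c k \<sigma> :: "real \<Rightarrow> real"
  assumes I: "is_interval I" "open I"
    and k: "continuous_on I k" "\<forall>s\<in>I. k s > 0" and \<sigma>: "continuous_on I \<sigma>"
    and da: "\<And>s. s \<in> I \<Longrightarrow> (a has_real_derivative k s * b s) (at s)"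
    and db: "\<And>s. s \<in> I \<Longrightarrow> (b has_real_derivative - k s * a s + \<sigma> s * c s) (at s)"
    and dc: "\<And>s. s \<in> I \<Longrightarrow> (c has_real_derivative - \<sigma> s * b s) (at s)"
    and c: "\<forall>s\<in>I. c s = c0" and s1: "s1 \<in> I" "\<sigma> s1 \<noteq> 0"
  shows "\<forall>s\<in>I. b s = 0"
proof -
  have \<sigma>b: "\<sigma> s * b s = 0" if "s \<in> I" for s
    using DERIV_locally_constant_eq_0[OF I(2) that c dc[OF that]] by simp
  have "(\<lambda>s. a s ^ 2 + b s ^ 2) constant_on I"
  proof (rule constant_on_if_has_real_derivative_0[OF I(1)])
    fix s assume s: "s \<in> I"
    have "((\<lambda>s. a s ^ 2 + b s ^ 2) has_real_derivative
        2 * a s * (k s * b s) + 2 * b s * (- k s * a s + \<sigma> s * c s)) (at s)"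
      by (auto intro!: derivative_eq_intros da[OF s] db[OF s])
    moreover have "2 * a s * (k s * b s) + 2 * b s * (- k s * a s + \<sigma> s * c s) = 2 * c s * (\<sigma> s * b s)"
      by (simp add: algebra_simps)
    ultimately show "((\<lambda>s. a s ^ 2 + b s ^ 2) has_real_derivative 0) (at s)"
      using \<sigma>b[OF s] by simp
  qed
  then obtain M where M: "\<And>s. s \<in> I \<Longrightarrow> a s ^ 2 + b s ^ 2 = M"
    unfolding constant_on_def by blast
  show ?thesis
  proof (cases "M = 0")
    case True
    then show ?thesis using M by (simp add: sum_power2_eq_zero_iff)
  next
    case False
    \<comment> \<open>Where \<sigma> does not vanish, b vanishes nearby, so b' = 0 forces k a = \<sigma> c0 and a^2 = M;
      where \<sigma> = 0 the expression (\<sigma> c0 / k)^2 is 0. By connectedness only one case occurs.\<close>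
    define \<psi> where "\<psi> s = (\<sigma> s * c0 / k s) ^ 2" for s
    have \<psi>_nonzero: "\<psi> s = M" if s: "s \<in> I" "\<sigma> s \<noteq> 0" for s
    proof -
      define S where "S = \<sigma> -` (- {0}) \<inter> I"
      have "open S"
        unfolding S_def using \<sigma> continuous_on_open_vimage[OF I(2)] open_Compl[OF closed_singleton]
        by blast
      moreover have "s \<in> S" "\<forall>y\<in>S. b y = 0"
        using s \<sigma>b unfolding S_def by auto
      ultimately have "- k s * a s + \<sigma> s * c s = 0"
        by (rule DERIV_locally_constant_eq_0[OF _ _ _ db[OF s(1)]])
      moreover have "k s > 0" "c s = c0"
        using k(2) c s(1) by blast+
      ultimately have "a s = \<sigma> s * c0 / k s"
        by (simp add: field_simps)
      moreover have "a s ^ 2 = M"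
        using M[OF s(1)] \<sigma>b[OF s(1)] s(2) by simp
      ultimately show ?thesis unfolding \<psi>_def by simp
    qed
    have "\<psi> constant_on I"
    proof (rule continuous_finite_range_constant)
      show "connected I" using I(1) is_interval_connected by blast
      show "continuous_on I \<psi>"
        unfolding \<psi>_def using k by (auto intro!: continuous_intros \<sigma>)
      have "\<psi> ` I \<subseteq> {M, 0}"
        using \<psi>_nonzero by (auto simp: \<psi>_def)
      then show "finite (\<psi> ` I)" by (rule finite_subset) simp
    qed
    then obtain p where p: "\<And>s. s \<in> I \<Longrightarrow> \<psi> s = p"
      unfolding constant_on_def by blast
    have "p = M"
      using p[OF s1(1)] \<psi>_nonzero[OF s1] by simp
    then have "\<sigma> s \<noteq> 0" if "s \<in> I" for s
      using p[OF that] False by (auto simp: \<psi>_def)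
    then show ?thesis using \<sigma>b by simp
  qed
qed

lemma helical_curve_iff_helical_curve_binormal:
  fixes T W N :: "real \<Rightarrow> real^3" and k \<sigma> :: "real \<Rightarrow> real"
  assumes I: "is_interval I" "open I" "I \<noteq> {}"
    and k: "continuous_on I k" "\<forall>s\<in>I. k s > 0" and \<sigma>: "continuous_on I \<sigma>"
    and unit: "\<forall>s\<in>I. norm (T s) = 1" "\<forall>s\<in>I. norm (N s) = 1"
    and orth: "\<forall>s\<in>I. T s \<bullet> N s = 0"
    and dT: "\<And>s. s \<in> I \<Longrightarrow> (T has_vector_derivative k s *\<^sub>R W s) (at s)"
    and dW: "\<And>s. s \<in> I \<Longrightarrow> (W has_vector_derivative - k s *\<^sub>R T s + \<sigma> s *\<^sub>R N s) (at s)"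
    and dN: "\<And>s. s \<in> I \<Longrightarrow> (N has_vector_derivative - \<sigma> s *\<^sub>R W s) (at s)"
  shows "helical_curve I T \<longleftrightarrow> helical_curve I N"
proof
  assume "helical_curve I T"
  then obtain d where d: "norm d = 1" "(\<lambda>s. T s \<bullet> d) constant_on I"
    using helical_curve_iff_constant_inner unit(1) by blast
  obtain c where c: "\<forall>s\<in>I. T s \<bullet> d = c"
    using d(2) unfolding constant_on_def by blast
  have "W s \<bullet> d = 0" if s: "s \<in> I" for s
  proof -
    have "(k s *\<^sub>R W s) \<bullet> d = 0"
      using DERIV_locally_constant_eq_0[OF I(2) s c has_real_derivative_inner_left[OF dT[OF s]]] .
    then show ?thesis using k(2) s by force
  qed
  then have "(\<lambda>s. N s \<bullet> d) constant_on I"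
    using has_real_derivative_inner_left[OF dN, of _ d]
    by (intro constant_on_if_has_real_derivative_0[OF I(1)]) simp
  then show "helical_curve I N"
    using helical_curve_iff_constant_inner unit(2) d(1) by blast
next
  assume "helical_curve I N"
  then obtain d c where d: "norm d = 1" "\<forall>s\<in>I. N s \<bullet> d = c"
    using helical_curve_iff_constant_inner unit(2) unfolding constant_on_def by blast
  show "helical_curve I T"
  proof (cases "\<exists>s1\<in>I. \<sigma> s1 \<noteq> 0")
    case True
    then obtain s1 where s1: "s1 \<in> I" "\<sigma> s1 \<noteq> 0" by blast
    have "\<forall>s\<in>I. W s \<bullet> d = 0"
      using has_real_derivative_inner_left[OF dT, of _ d] has_real_derivative_inner_left[OF dW, of _ d]
        has_real_derivative_inner_left[OF dN, of _ d]
      by (intro frenet_system_middle_component_eq_0[OF I(1,2) k \<sigma> _ _ _ d(2) s1])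
        (simp_all add: inner_add_left inner_diff_left)
    then have "(\<lambda>s. T s \<bullet> d) constant_on I"
      using has_real_derivative_inner_left[OF dT, of _ d]
      by (intro constant_on_if_has_real_derivative_0[OF I(1)]) simp
    then show ?thesis
      using helical_curve_iff_constant_inner unit(1) d(1) by blast
  next
    case False
    have "(N has_vector_derivative 0) (at s within I)" if "s \<in> I" for s
      using dN[OF that] False that by (auto intro: has_vector_derivative_at_within)
    then obtain N0 where N0: "\<And>s. s \<in> I \<Longrightarrow> N s = N0"
      using has_vector_derivative_zero_constant[OF is_interval_convex[OF I(1)]] by blast
    obtain s0 where s0: "s0 \<in> I" using I(3) by blast
    have "norm N0 = 1" using bspec[OF unit(2) s0] N0[OF s0] by simp
    moreover have "\<forall>s\<in>I. T s \<bullet> N0 = cos (pi / 2)"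
      using N0 orth by simp
    ultimately show ?thesis
      unfolding helical_curve_def by (intro exI[of _ N0] exI[of _ "pi / 2"] conjI)
  qed
qed

lemma has_real_derivative_normalized_pair:
  fixes g n :: "real \<Rightarrow> real"
  assumes dg: "(g has_real_derivative g') (at s)" and dn: "(n has_real_derivative n') (at s)"
    and pos: "g s ^ 2 + n s ^ 2 > 0"
  defines "\<omega> \<equiv> (g s * n' - n s * g') / (g s ^ 2 + n s ^ 2)"
  shows "((\<lambda>s. g s / sqrt (g s ^ 2 + n s ^ 2)) has_real_derivative
            - (n s / sqrt (g s ^ 2 + n s ^ 2)) * \<omega>) (at s)"
    and "((\<lambda>s. n s / sqrt (g s ^ 2 + n s ^ 2)) has_real_derivative
            g s / sqrt (g s ^ 2 + n s ^ 2) * \<omega>) (at s)"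
proof -
  define k where "k = sqrt (g s ^ 2 + n s ^ 2)"
  have k: "k \<noteq> 0" "g s ^ 2 + n s ^ 2 = k * k"
    using pos by (auto simp: k_def)
  have dk: "((\<lambda>s. sqrt (g s ^ 2 + n s ^ 2)) has_real_derivative (g s * g' + n s * n') / k) (at s)"
    using pos unfolding k_def by (auto intro!: derivative_eq_intros dg dn simp: divide_simps)
  have "(g' * k - g s * ((g s * g' + n s * n') / k)) / (k * k) = - (n s / k) * \<omega>"
    unfolding \<omega>_def k(2) using k(1) by (simp add: field_simps) (use k(2) in algebra)
  then show "((\<lambda>s. g s / sqrt (g s ^ 2 + n s ^ 2)) has_real_derivative
            - (n s / sqrt (g s ^ 2 + n s ^ 2)) * \<omega>) (at s)"
    using DERIV_divide[OF dg dk] k(1) by (simp add: k_def)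
  have "(n' * k - n s * ((g s * g' + n s * n') / k)) / (k * k) = g s / k * \<omega>"
    unfolding \<omega>_def k(2) using k(1) by (simp add: field_simps) (use k(2) in algebra)
  then show "((\<lambda>s. n s / sqrt (g s ^ 2 + n s ^ 2)) has_real_derivative
            g s / sqrt (g s ^ 2 + n s ^ 2) * \<omega>) (at s)"
    using DERIV_divide[OF dn dk] k(1) by (simp add: k_def)
qed

lemma darboux_frame_orthonormal:
  assumes "darboux_frame I \<alpha> T V U kg kn tg" "s \<in> I"
  shows "norm (T s) = 1" "norm (V s) = 1" "norm (U s) = 1"
    and "T s \<bullet> V s = 0" "T s \<bullet> U s = 0" "V s \<bullet> U s = 0"
proof -
  have T: "norm (T s) = 1" and U: "norm (U s) = 1" and TU: "T s \<bullet> U s = 0"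
    and V: "V s = cross3 (U s) (T s)"
    using assms unfolding darboux_frame_def by blast+
  show "norm (T s) = 1" "norm (U s) = 1" "T s \<bullet> U s = 0" by fact+
  show "T s \<bullet> V s = 0" "V s \<bullet> U s = 0"
    using V dot_cross_self by (simp_all add: inner_commute)
  have "norm (V s) ^ 2 = 1"
    using norm_cross_dot[of "U s" "T s"] V T U TU by (simp add: inner_commute)
  then show "norm (V s) = 1"
    using norm_ge_zero[of "V s"] by (auto simp: power2_eq_1_iff)
qed

definition curvature :: "(real \<Rightarrow> real) \<Rightarrow> (real \<Rightarrow> real) \<Rightarrow> real \<Rightarrow> real" where
  "curvature kg kn s = sqrt (kg s ^ 2 + kn s ^ 2)"

definition principal_normal :: "(real \<Rightarrow> real^3) \<Rightarrow> (real \<Rightarrow> real^3) \<Rightarrow> (real \<Rightarrow> real) \<Rightarrow> (real \<Rightarrow> real)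
    \<Rightarrow> real \<Rightarrow> real^3" where
  "principal_normal V U kg kn s =
     (kg s / curvature kg kn s) *\<^sub>R V s + (kn s / curvature kg kn s) *\<^sub>R U s"

definition binormal :: "(real \<Rightarrow> real^3) \<Rightarrow> (real \<Rightarrow> real^3) \<Rightarrow> (real \<Rightarrow> real) \<Rightarrow> (real \<Rightarrow> real)
    \<Rightarrow> real \<Rightarrow> real^3" where
  "binormal V U kg kn s =
     (- (kn s / curvature kg kn s)) *\<^sub>R V s + (kg s / curvature kg kn s) *\<^sub>R U s"

definition torsion :: "(real \<Rightarrow> real) \<Rightarrow> (real \<Rightarrow> real) \<Rightarrow> (real \<Rightarrow> real) \<Rightarrow> real \<Rightarrow> real" where
  "torsion kg kn tg s =
     (kg s * deriv kn s - kn s * deriv kg s) / (kg s ^ 2 + kn s ^ 2) + tg s"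

lemma darboux_frame_frenet_equations:
  assumes frame: "darboux_frame I \<alpha> T V U kg kn tg" and s: "s \<in> I"
    and dg: "kg differentiable (at s)" and dn: "kn differentiable (at s)"
    and pos: "kg s ^ 2 + kn s ^ 2 > 0"
  defines "k \<equiv> curvature kg kn" and "W \<equiv> principal_normal V U kg kn"
    and "N \<equiv> binormal V U kg kn" and "\<sigma> \<equiv> torsion kg kn tg"
  shows "(T has_vector_derivative k s *\<^sub>R W s) (at s)"
    and "(W has_vector_derivative - k s *\<^sub>R T s + \<sigma> s *\<^sub>R N s) (at s)"
    and "(N has_vector_derivative - \<sigma> s *\<^sub>R W s) (at s)"
proof -
  have dT: "(T has_vector_derivative kg s *\<^sub>R V s + kn s *\<^sub>R U s) (at s)"
    and dV: "(V has_vector_derivative - kg s *\<^sub>R T s + tg s *\<^sub>R U s) (at s)"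
    and dU: "(U has_vector_derivative - kn s *\<^sub>R T s - tg s *\<^sub>R V s) (at s)"
    using frame s unfolding darboux_frame_def by blast+
  define p q where "p = kg s / k s" and "q = kn s / k s"
  define \<omega> where "\<omega> = (kg s * deriv kn s - kn s * deriv kg s) / (kg s ^ 2 + kn s ^ 2)"
  have dp: "((\<lambda>s. kg s / k s) has_real_derivative - q * \<omega>) (at s)"
    and dq: "((\<lambda>s. kn s / k s) has_real_derivative p * \<omega>) (at s)"
    unfolding p_def q_def \<omega>_def k_def curvature_def
    using has_real_derivative_normalized_pair[OF dg[unfolded DERIV_deriv_iff_real_differentiable[symmetric]]
        dn[unfolded DERIV_deriv_iff_real_differentiable[symmetric]] pos]
    by simp_all
  have "k s > 0" "k s * k s = kg s * kg s + kn s * kn s"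
    using pos unfolding k_def curvature_def by (simp_all add: power2_eq_square)
  then have k: "k s = p * kg s + q * kn s" "p * kn s = q * kg s"
    unfolding p_def q_def by (simp_all add: field_simps)
  have W: "W s = p *\<^sub>R V s + q *\<^sub>R U s" and N: "N s = (- q) *\<^sub>R V s + p *\<^sub>R U s"
    and \<sigma>: "\<sigma> s = \<omega> + tg s"
    unfolding W_def N_def \<sigma>_def principal_normal_def binormal_def torsion_def p_def q_def \<omega>_def k_def
    by simp_all
  show "(T has_vector_derivative k s *\<^sub>R W s) (at s)"
    using dT \<open>k s > 0\<close> by (simp add: W_def k_def principal_normal_def scaleR_add_right)
  have "(W has_vector_derivative
      p *\<^sub>R (- kg s *\<^sub>R T s + tg s *\<^sub>R U s) + (- q * \<omega>) *\<^sub>R V s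
      + (q *\<^sub>R (- kn s *\<^sub>R T s - tg s *\<^sub>R V s) + (p * \<omega>) *\<^sub>R U s)) (at s)"
    unfolding W_def principal_normal_def k_def[symmetric] p_def q_def
    by (intro derivative_intros dp[unfolded q_def] dq[unfolded p_def] dV dU)
  moreover have "p *\<^sub>R (- kg s *\<^sub>R T s + tg s *\<^sub>R U s) + (- q * \<omega>) *\<^sub>R V s
      + (q *\<^sub>R (- kn s *\<^sub>R T s - tg s *\<^sub>R V s) + (p * \<omega>) *\<^sub>R U s) = - k s *\<^sub>R T s + \<sigma> s *\<^sub>R N s"
    unfolding N \<sigma> k(1) by (simp add: vec_eq_iff algebra_simps)
  ultimately show "(W has_vector_derivative - k s *\<^sub>R T s + \<sigma> s *\<^sub>R N s) (at s)"
    by simp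
  have "(N has_vector_derivative
      (- q) *\<^sub>R (- kg s *\<^sub>R T s + tg s *\<^sub>R U s) + (- (p * \<omega>)) *\<^sub>R V s
      + (p *\<^sub>R (- kn s *\<^sub>R T s - tg s *\<^sub>R V s) + (- q * \<omega>) *\<^sub>R U s)) (at s)"
    unfolding N_def binormal_def k_def[symmetric] p_def q_def
    by (intro derivative_intros dp[unfolded q_def] dq[unfolded p_def] dV dU)
  moreover have "(- q) *\<^sub>R (- kg s *\<^sub>R T s + tg s *\<^sub>R U s) + (- (p * \<omega>)) *\<^sub>R V s
      + (p *\<^sub>R (- kn s *\<^sub>R T s - tg s *\<^sub>R V s) + (- q * \<omega>) *\<^sub>R U s) = - \<sigma> s *\<^sub>R W s"
    unfolding W \<sigma> using k(2) by (simp add: vec_eq_iff algebra_simps)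
  ultimately show "(N has_vector_derivative - \<sigma> s *\<^sub>R W s) (at s)"
    by simp
qed

lemma norm_normal_darboux:
  assumes "darboux_frame I \<alpha> T V U kg kn tg" "s \<in> I"
  shows "norm (normal_darboux V U kg kn s) = curvature kg kn s"
proof -
  have "normal_darboux V U kg kn s \<bullet> normal_darboux V U kg kn s = kg s ^ 2 + kn s ^ 2"
    using darboux_frame_orthonormal[OF assms]
    by (simp add: normal_darboux_def inner_add_left inner_add_right inner_diff_left
        inner_diff_right inner_commute norm_eq_1 power2_eq_square)
  then show ?thesis
    by (simp add: norm_eq_sqrt_inner curvature_def)
qed

lemma binormal_eq_unit_normal_darboux:
  assumes "darboux_frame I \<alpha> T V U kg kn tg" "s \<in> I"
  shows "binormal V U kg kn s
           = (1 / norm (normal_darboux V U kg kn s)) *\<^sub>R normal_darboux V U kg kn s"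
  using norm_normal_darboux[OF assms]
  by (simp add: binormal_def normal_darboux_def scaleR_diff_right scaleR_add_right divide_inverse
      mult.commute)

lemma Dn_darboux_slant_helix_iff_helical_curve_binormal:
  assumes "darboux_frame I \<alpha> T V U kg kn tg"
  shows "Dn_darboux_slant_helix I V U kg kn \<longleftrightarrow> helical_curve I (binormal V U kg kn)"
proof -
  have "Dn_darboux_slant_helix I V U kg kn \<longleftrightarrow>
      helical_curve I (\<lambda>s. (1 / norm (normal_darboux V U kg kn s)) *\<^sub>R normal_darboux V U kg kn s)"
    unfolding Dn_darboux_slant_helix_def helical_curve_def ..
  also have "\<dots> \<longleftrightarrow> helical_curve I (binormal V U kg kn)"
    using binormal_eq_unit_normal_darboux[OF assms] by (intro helical_curve_cong) simp
  finally show ?thesis .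
qed

lemma helical_curve_iff_Dn_darboux_slant_helix:
  assumes I: "is_interval I" "open I" "I \<noteq> {}"
    and frame: "darboux_frame I \<alpha> T V U kg kn tg"
    and kg: "smooth_real_on I kg" and kn: "smooth_real_on I kn" and tg: "continuous_on I tg"
    and nonzero: "\<forall>s\<in>I. (kg s, kn s) \<noteq> (0, 0)"
  shows "helical_curve I T \<longleftrightarrow> Dn_darboux_slant_helix I V U kg kn"
proof -
  have pos: "kg s ^ 2 + kn s ^ 2 > 0" if "s \<in> I" for s
    using nonzero that by (simp add: sum_power2_gt_zero_iff)
  have curvature_pos: "\<forall>s\<in>I. curvature kg kn s > 0"
    using pos by (simp add: curvature_def)
  have "continuous_on I (curvature kg kn)"
    unfolding curvature_def
    by (intro continuous_intros smooth_real_on_continuous_on kg kn)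
  moreover have "continuous_on I (torsion kg kn tg)"
    unfolding torsion_def using pos
    by (intro continuous_intros smooth_real_on_continuous_on smooth_real_on_continuous_on_deriv kg kn tg)
      force
  moreover have "\<forall>s\<in>I. norm (T s) = 1" "\<forall>s\<in>I. T s \<bullet> binormal V U kg kn s = 0"
    using darboux_frame_orthonormal[OF frame]
    by (simp_all add: binormal_def inner_add_right inner_diff_right)
  moreover have "\<forall>s\<in>I. norm (binormal V U kg kn s) = 1"
    using binormal_eq_unit_normal_darboux[OF frame] norm_normal_darboux[OF frame] curvature_pos
    by auto
  moreover note darboux_frame_frenet_equations[OF frame _ smooth_real_on_differentiable[OF kg]
        smooth_real_on_differentiable[OF kn] pos]
  ultimately have "helical_curve I T \<longleftrightarrow> helical_curve I (binormal V U kg kn)"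
    using curvature_pos
    by (intro helical_curve_iff_helical_curve_binormal[OF I, where k = "curvature kg kn"
          and \<sigma> = "torsion kg kn tg" and W = "principal_normal V U kg kn"]) simp_all
  also have "\<dots> \<longleftrightarrow> Dn_darboux_slant_helix I V U kg kn"
    using Dn_darboux_slant_helix_iff_helical_curve_binormal[OF frame] ..
  finally show ?thesis .
qed

lemma associated_curve_has_vector_derivative:
  assumes frame: "darboux_frame I \<alpha> T V U kg kn tg" and s: "s \<in> I"
    and y: "(y1 has_real_derivative y1') (at s)" "(y2 has_real_derivative y2') (at s)"
      "(y3 has_real_derivative y3') (at s)"
    and \<gamma>: "\<forall>s. \<gamma> s = \<alpha> s + y1 s *\<^sub>R T s + y2 s *\<^sub>R V s + y3 s *\<^sub>R U s"
  shows "(\<gamma> has_vector_derivative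
            (1 + y1' - y2 s * kg s - y3 s * kn s) *\<^sub>R T s
          + (y1 s * kg s + y2' - y3 s * tg s) *\<^sub>R V s
          + (y1 s * kn s + y2 s * tg s + y3') *\<^sub>R U s) (at s)"
proof -
  have "\<gamma> = (\<lambda>s. \<alpha> s + y1 s *\<^sub>R T s + y2 s *\<^sub>R V s + y3 s *\<^sub>R U s)"
    using \<gamma> by blast
  moreover have "(\<dots> has_vector_derivative
      T s + (y1 s *\<^sub>R (kg s *\<^sub>R V s + kn s *\<^sub>R U s) + y1' *\<^sub>R T s)
      + (y2 s *\<^sub>R (- kg s *\<^sub>R T s + tg s *\<^sub>R U s) + y2' *\<^sub>R V s)
      + (y3 s *\<^sub>R (- kn s *\<^sub>R T s - tg s *\<^sub>R V s) + y3' *\<^sub>R U s)) (at s)"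
    using frame s unfolding darboux_frame_def by (intro derivative_intros y) auto
  ultimately show ?thesis
    by (simp add: algebra_simps)
qed

lemma associated_curve_speed:
  assumes frame: "darboux_frame I \<alpha> T V U kg kn tg" and s: "s \<in> I"
    and y: "(y1 has_real_derivative y1') (at s)" "(y2 has_real_derivative y2') (at s)"
      "(y3 has_real_derivative y3') (at s)"
    and \<gamma>: "\<forall>s. \<gamma> s = \<alpha> s + y1 s *\<^sub>R T s + y2 s *\<^sub>R V s + y3 s *\<^sub>R U s"
    and R: "(\<gamma> has_vector_derivative R *\<^sub>R T s) (at s)"
  shows "R = 1 + y1' - y2 s * kg s - y3 s * kn s"
proof -
  have TT: "T s \<bullet> T s = 1" and VT: "V s \<bullet> T s = 0" and UT: "U s \<bullet> T s = 0"
    using darboux_frame_orthonormal[OF frame s] by (simp_all add: norm_eq_1 inner_commute)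
  have "R = (R *\<^sub>R T s) \<bullet> T s"
    using TT by simp
  also have "\<dots> = ((1 + y1' - y2 s * kg s - y3 s * kn s) *\<^sub>R T s
          + (y1 s * kg s + y2' - y3 s * tg s) *\<^sub>R V s
          + (y1 s * kn s + y2 s * tg s + y3') *\<^sub>R U s) \<bullet> T s"
    using vector_derivative_unique_at[OF R associated_curve_has_vector_derivative[OF frame s y \<gamma>]]
    by (rule arg_cong)
  also have "\<dots> = 1 + y1' - y2 s * kg s - y3 s * kn s"
    using TT VT UT by (simp add: inner_add_left)
  finally show ?thesis .
qed

lemma general_helix_iff_helical_curve:
  assumes I: "is_interval I" and frame: "darboux_frame I \<alpha> T V U kg kn tg"
    and kg: "continuous_on I kg" and kn: "continuous_on I kn"
    and y: "smooth_real_on I y1" "smooth_real_on I y2" "smooth_real_on I y3"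
    and \<gamma>: "\<forall>s. \<gamma> s = \<alpha> s + y1 s *\<^sub>R T s + y2 s *\<^sub>R V s + y3 s *\<^sub>R U s"
    and \<gamma>': "\<forall>s\<in>I. (\<gamma> has_vector_derivative R s *\<^sub>R T s) (at s) \<and> R s \<noteq> 0"
  shows "general_helix I \<gamma> \<longleftrightarrow> helical_curve I T"
proof -
  have speed: "R s = 1 + deriv y1 s - y2 s * kg s - y3 s * kn s" if "s \<in> I" for s
    using \<gamma>' that by (intro associated_curve_speed[OF frame that
          smooth_real_on_has_real_derivative[OF y(1) that] smooth_real_on_has_real_derivative[OF y(2) that]
          smooth_real_on_has_real_derivative[OF y(3) that] \<gamma>]) simp
  have "continuous_on I (\<lambda>s. 1 + deriv y1 s - y2 s * kg s - y3 s * kn s)"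
    by (intro continuous_intros kg kn smooth_real_on_continuous_on[OF y(2)]
        smooth_real_on_continuous_on[OF y(3)] smooth_real_on_continuous_on_deriv[OF y(1)])
  then have "continuous_on I R"
    by (rule continuous_on_eq) (simp add: speed)
  moreover have "\<forall>s\<in>I. R s \<noteq> 0"
    using \<gamma>' by blast
  ultimately obtain \<epsilon> where \<epsilon>: "\<bar>\<epsilon>\<bar> = 1" "\<forall>s\<in>I. sgn (R s) = \<epsilon>"
    using sgn_constant_if_continuous_nonvanishing[OF is_interval_connected[OF I]] by blast
  have vd: "vector_derivative \<gamma> (at s) = R s *\<^sub>R T s" if "s \<in> I" for s
    using \<gamma>' that vector_derivative_at by blast
  have T: "norm (T s) = 1" if "s \<in> I" for s
    using darboux_frame_orthonormal(1)[OF frame that] .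
  have "\<forall>s\<in>I. \<gamma> differentiable (at s) \<and> vector_derivative \<gamma> (at s) \<noteq> 0"
  proof
    fix s assume s: "s \<in> I"
    have "T s \<noteq> 0"
      using T[OF s] by auto
    then show "\<gamma> differentiable (at s) \<and> vector_derivative \<gamma> (at s) \<noteq> 0"
      using \<gamma>' s vd[OF s] by (auto intro: differentiableI_vector)
  qed
  then have "general_helix I \<gamma> \<longleftrightarrow>
      helical_curve I (\<lambda>s. (1 / norm (vector_derivative \<gamma> (at s))) *\<^sub>R vector_derivative \<gamma> (at s))"
    unfolding general_helix_def helical_curve_def by simp
  also have "\<dots> \<longleftrightarrow> helical_curve I (\<lambda>s. \<epsilon> *\<^sub>R T s)"
    using vd T \<epsilon>(2) by (intro helical_curve_cong) (simp add: real_sgn_eq[symmetric])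
  also have "\<dots> \<longleftrightarrow> helical_curve I T"
    by (rule helical_curve_scaleR_iff[OF \<epsilon>(1)])
  finally show ?thesis .
qed

theorem theorem3p1:
  fixes I :: "real set"
    and \<alpha> T V U \<gamma> :: "real \<Rightarrow> real^3"
    and kg kn tg y1 y2 y3 R :: "real \<Rightarrow> real"
  assumes I: "is_interval I" "open I" "I \<noteq> {}"
    and frame: "darboux_frame I \<alpha> T V U kg kn tg"
    and curv_smooth: "smooth_real_on I kg" "smooth_real_on I kn" "smooth_real_on I tg"
    and nonzero: "\<forall>s\<in>I. (kg s, kn s) \<noteq> (0, 0)"
    and y_smooth: "smooth_real_on I y1" "smooth_real_on I y2" "smooth_real_on I y3"
    and gamma_def: "\<forall>s. \<gamma> s = \<alpha> s + y1 s *\<^sub>R T s + y2 s *\<^sub>R V s + y3 s *\<^sub>R U s"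
    and gamma_deriv: "\<forall>s\<in>I. (\<gamma> has_vector_derivative R s *\<^sub>R T s) (at s) \<and> R s \<noteq> 0"
  shows "(general_helix I \<gamma> \<longleftrightarrow> helical_curve I T) \<and>
         (helical_curve I T \<longleftrightarrow> Dn_darboux_slant_helix I V U kg kn)"
proof
  show "general_helix I \<gamma> \<longleftrightarrow> helical_curve I T"
    using general_helix_iff_helical_curve[OF I(1) frame smooth_real_on_continuous_on[OF curv_smooth(1)]
        smooth_real_on_continuous_on[OF curv_smooth(2)] y_smooth gamma_def gamma_deriv] .
  show "helical_curve I T \<longleftrightarrow> Dn_darboux_slant_helix I V U kg kn"
    using helical_curve_iff_Dn_darboux_slant_helix[OF I frame curv_smooth(1,2)
        smooth_real_on_continuous_on[OF curv_smooth(3)] nonzero] .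
qed

end
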